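(* Let $\mathbb K$ be a field of characteristic $0$ and $N\ge1$. The image of the weight system $W^{\mathrm{St}}_{\mathfrak{gl}_N}:\mathcal A(\downarrow\downarrow)_{\mathbb K}\to\mathrm{End}(\mathbb K^N)^{\otimes2}$ associated with $(\mathfrak{gl}_N(\mathbb K),B_0,\mathrm{St})$ is a commutative subalgebra.
   Context: Jacobi diagrams on an oriented compact $1$-manifold $X$ span $\mathcal A(X)$ modulo AS, IHX, STU; $\mathcal A(X)_{\mathbb K}=\mathcal A(X)\otimes\mathbb K$; $\downarrow\downarrow$ is two downward oriented strands, and $\mathcal A(\downarrow\downarrow)$ is an algebra under stacking. For a metrized Lie algebra $(\mathfrak g,\langle\cdot,\cdot\rangle)$ over $\mathbb K$, the universal weight system $W_{\mathfrak g}:\mathcal A(\downarrow^{\otimes n})_{\mathbb K}\to U(\mathfrak g)^{\otimes n}$ is the algebra homomorphism obtained by putting on each edge the Casimir tensor $\Omega=\sum_av_a\otimes v^a$ (basis and dual basis w.r.t. the form), at each trivalent vertex $-\mathbf t$ where $\mathbf t\in\mathfrak g^{\otimes3}$ corresponds to $(x,y,z)\mapsto\langle[x,y],z\rangle$ (factors in cyclic order), contracting along edges and multiplying in $U(\mathfrak g)$ along each strand in its orientation order; for a representation $\rho:\mathfrak g\to\mathrm{End}(V)$, $W^\rho_{\mathfrak g}=U(\rho)^{\otimes n}\circ W_{\mathfrak g}$. $B_0(x,y)=\mathrm{tr}(xy)$ is the trace form and $\mathrm{St}$ the standard representation on $\mathbb K^N$. *)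

theory Defs
  imports "HOL-Analysis.Analysis" "HOL-Library.FuncSet"
begin

text \<open>
  Encoding of Jacobi diagrams on two downward strands.
  A diagram is a tuple (m, T, S1, S2, Ed):
  the flags (edge ends) are 0,...,m-1; T lists the trivalent vertices, each
  given by the triple of its flags in their cyclic order; S1, S2 list the flags
  (univalent vertices) on strand 1 and strand 2 in orientation order; Ed lists
  the edges as pairs of flags.
\<close>

type_synonym jdiag = "nat \<times> (nat \<times> nat \<times> nat) list \<times> nat list \<times> nat list \<times> (nat \<times> nat) list"

definition vflags :: "(nat \<times> nat \<times> nat) list \<Rightarrow> nat list" where
  "vflags T = concat (map (\<lambda>(a, b, c). [a, b, c]) T)"

definition eflags :: "(nat \<times> nat) list \<Rightarrow> nat list" where
  "eflags Ed = concat (map (\<lambda>(f, g). [f, g]) Ed)"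

fun wf_jdiag :: "jdiag \<Rightarrow> bool" where
  "wf_jdiag (m, T, S1, S2, Ed) \<longleftrightarrow>
     distinct (vflags T @ S1 @ S2) \<and> set (vflags T @ S1 @ S2) = {0..<m} \<and>
     distinct (eflags Ed) \<and> set (eflags Ed) = {0..<m}"

text \<open>Matrix units E_ij of gl_N acting on K^N (standard representation), N = CARD('n).\<close>
definition Eu :: "'n::finite \<times> 'n \<Rightarrow> 'k::field ^ 'n ^ 'n" where
  "Eu p = (\<chi> r s. if (r, s) = p then 1 else 0)"

definition mprod :: "('k::field ^ 'n::finite ^ 'n) list \<Rightarrow> 'k ^ 'n ^ 'n" where
  "mprod xs = foldr (\<lambda>A B. A ** B) xs (mat 1)"

definition mtr :: "'k::field ^ 'n::finite ^ 'n \<Rightarrow> 'k" where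
  "mtr A = (\<Sum>i\<in>UNIV. A $ i $ i)"

definition lbr :: "'k::field ^ 'n::finite ^ 'n \<Rightarrow> 'k ^ 'n ^ 'n \<Rightarrow> 'k ^ 'n ^ 'n" where
  "lbr A B = A ** B - B ** A"

text \<open>End(K^N) \<otimes> End(K^N) identified (as an algebra) with End(K^N \<otimes> K^N):
  A \<otimes> B corresponds to the Kronecker product.\<close>
definition kron :: "'k::field ^ 'n::finite ^ 'n \<Rightarrow> 'k ^ 'n ^ 'n \<Rightarrow> 'k ^ ('n \<times> 'n) ^ ('n \<times> 'n)" where
  "kron A B = (\<chi> p q. A $ fst p $ fst q * B $ snd p $ snd q)"

text \<open>The weight system W^St_{gl_N} for the trace form B_0 on a diagram:
  the Casimir is \<Sum>_{ij} E_ij \<otimes> E_ji (dual basis of E_ij w.r.t. tr(xy) is E_ji),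
  so each edge carries a label (i,j) on one end and (j,i) on the other;
  each trivalent vertex with flags (a,b,c) in cyclic order contributes -tr([x_a,x_b]x_c);
  each strand contributes the ordered product of the matrices on it.\<close>
fun Wst :: "jdiag \<Rightarrow> 'k::field ^ ('n::finite \<times> 'n) ^ ('n \<times> 'n)" where
  "Wst (m, T, S1, S2, Ed) =
     (\<chi> p q. \<Sum>l\<in>PiE {0..<m} (\<lambda>_. (UNIV :: ('n \<times> 'n) set)).
        (\<Prod>(f, g)\<leftarrow>Ed. if l g = prod.swap (l f) then 1 else 0)
      * (\<Prod>(a, b, c)\<leftarrow>T. - mtr (lbr (Eu (l a)) (Eu (l b)) ** Eu (l c)))
      * kron (mprod (map (\<lambda>x. Eu (l x)) S1)) (mprod (map (\<lambda>x. Eu (l x)) S2)) $ p $ q)"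

text \<open>The image of W^St_{gl_N} on A(\<down>\<down>)_K: the K-linear span of the values on diagrams.\<close>
definition Wimage :: "('k::field ^ ('n::finite \<times> 'n) ^ ('n \<times> 'n)) set" where
  "Wimage = {X. \<exists>A c. finite A \<and> (\<forall>D\<in>A. wf_jdiag D) \<and>
                 X = (\<chi> p q. \<Sum>D\<in>A. c D * (Wst D :: 'k ^ ('n \<times> 'n) ^ ('n \<times> 'n)) $ p $ q)}"

end

theory Submission
  imports Defs
begin

(* In the state sum defining W(D), a labelling puts a matrix unit E_ij on every flag.  In a
   nonzero summand every edge carries (i, j) and (j, i), every trivalent vertex a cyclic triple
   (i, j), (j, k), (k, i), and every strand a walk of indices from its row to its column index.
   The charge [i = k] - [j = k] of (i, j) at an index k vanishes on edges and on such vertices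
   and telescopes along walks; since edges, as well as vertices and strands, partition the
   flags, the walks p1 -> q1 and p2 -> q2 on the two strands have opposite charges at every k,
   whence (q1, q2) is (p1, p2) or (p2, p1).  Relabelling all indices by a permutation does not
   change W(D); for the transposition of a and b this makes W(D) commute with the flip of the
   two tensor factors.  These two properties force W(D) to be of the form [[x, y], [y, x]] on
   every block spanned by e_a (x) e_b and e_b (x) e_a, and such matrices commute.  Finally,
   stacking diagrams multiplies their values, so the span of the W(D) is a subalgebra. *)

lemma Eu_nth [simp]: "Eu p $ r $ s = of_bool ((r, s) = p)"
  by (simp add: Eu_def)

lemma Eu_mult_nth: "(Eu x ** M) $ i $ j = (if fst x = i then M $ snd x $ j else 0)"
  by (cases x) (auto simp: matrix_matrix_mult_def of_bool_def if_distrib if_distribR cong: if_cong)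

lemma Eu_mult_Eu:
  "Eu x ** Eu y = (if snd x = fst y then Eu (fst x, snd y) else (0 :: 'k::field ^ 'n::finite ^ 'n))"
  by (cases x; cases y) (auto simp: vec_eq_iff Eu_mult_nth)

lemma mtr_eq_trace: "mtr A = trace A"
  by (simp add: mtr_def trace_def)

lemma trace_Eu: "trace (Eu x :: 'k::field ^ 'n::finite ^ 'n) = of_bool (fst x = snd x)"
proof (cases x)
  case (Pair a b)
  have "trace (Eu (a, b) :: 'k ^ 'n ^ 'n) = (\<Sum>i\<in>UNIV. if i = a then of_bool (a = b) else 0)"
    unfolding trace_def by (rule sum.cong) auto
  then show ?thesis
    by (simp add: Pair)
qed

lemma matrix_diff_mult_distrib: "(A - B) ** C = A ** C - B ** (C :: 'a::ring_1 ^ 'n ^ 'm)"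
  by (simp add: matrix_matrix_mult_def vec_eq_iff left_diff_distrib sum_subtractf)

lemma mtr_lbr_Eu:
  "mtr (lbr (Eu x) (Eu y) ** Eu z :: 'k::field ^ 'n::finite ^ 'n) =
     of_bool (snd x = fst y \<and> snd y = fst z \<and> snd z = fst x)
   - of_bool (snd y = fst x \<and> snd x = fst z \<and> snd z = fst y)"
proof -
  have trace_Eu3: "trace (Eu x ** Eu y ** Eu z :: 'k ^ 'n ^ 'n) =
      of_bool (snd x = fst y \<and> snd y = fst z \<and> snd z = fst x)" for x y z :: "'n \<times> 'n"
    by (simp add: Eu_mult_Eu trace_Eu trace_0[simplified])
  show ?thesis
    by (simp add: mtr_eq_trace lbr_def matrix_diff_mult_distrib trace_sub trace_Eu3)
qed

fun walk :: "('n \<times> 'n) list \<Rightarrow> 'n \<Rightarrow> 'n \<Rightarrow> bool" where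
  "walk [] i j \<longleftrightarrow> i = j"
| "walk (x # xs) i j \<longleftrightarrow> fst x = i \<and> walk xs (snd x) j"

lemma walk_map_prod:
  "inj \<sigma> \<Longrightarrow> walk (map (map_prod \<sigma> \<sigma>) xs) (\<sigma> i) (\<sigma> j) \<longleftrightarrow> walk xs i j"
  by (induction xs arbitrary: i) (auto simp: inj_eq)

definition mscale :: "'a::times \<Rightarrow> 'a ^ 'm ^ 'n \<Rightarrow> 'a ^ 'm ^ 'n" where
  "mscale c X = (\<chi> i j. c * X $ i $ j)"

lemma mscale_nth [simp]: "mscale c X $ i $ j = c * X $ i $ j"
  by (simp add: mscale_def)

lemma mscale_zero [simp]: "mscale 0 X = (0 :: 'a::semiring_0 ^ 'm ^ 'n)"
  by (simp add: vec_eq_iff)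

lemma mscale_one [simp]: "mscale 1 X = (X :: 'a::monoid_mult ^ 'm ^ 'n)"
  by (simp add: vec_eq_iff)

lemma mscale_add_left: "mscale (a + b) X = mscale a X + mscale b (X :: 'a::semiring_0 ^ 'm ^ 'n)"
  by (simp add: vec_eq_iff distrib_right)

lemma mscale_mscale: "mscale a (mscale b X) = mscale (a * b) (X :: 'a::semigroup_mult ^ 'm ^ 'n)"
  by (simp add: vec_eq_iff mult.assoc)

lemma mscale_sum: "mscale a (sum f A) = (\<Sum>x\<in>A. mscale a (f x) :: 'a::semiring_0 ^ 'm ^ 'n)"
  by (simp add: vec_eq_iff sum_component sum_distrib_left)

lemma sum_mscale_mono_neutral:
  assumes "finite B" "A \<subseteq> B"
  shows "(\<Sum>D\<in>A. mscale (c D) (W D))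
    = (\<Sum>D\<in>B. mscale (if D \<in> A then c D else 0) (W D :: 'a::semiring_0 ^ 'm ^ 'n))"
  using assms by (intro sum.mono_neutral_cong_left) auto

lemma mscale_mult_mscale: "mscale a X ** mscale b Y = mscale (a * b) (X ** (Y :: 'a::comm_semiring_1 ^ 'n ^ 'm))"
  by (simp add: vec_eq_iff matrix_matrix_mult_def sum_distrib_left mult_ac)

lemma sum_matrix_mult: "sum f A ** B = (\<Sum>a\<in>A. f a ** B :: 'a::comm_semiring_1 ^ 'n ^ 'm)"
  by (simp add: vec_eq_iff matrix_matrix_mult_def sum_component sum_distrib_right sum.swap[of _ UNIV])

lemma matrix_mult_sum: "B ** sum f A = (\<Sum>a\<in>A. B ** f a :: 'a::comm_semiring_1 ^ 'n ^ 'm)"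
  by (simp add: vec_eq_iff matrix_matrix_mult_def sum_component sum_distrib_left sum.swap[of _ UNIV])

lemma mprod_append: "mprod (xs @ ys) = mprod xs ** mprod ys"
  by (induction xs) (simp_all add: mprod_def matrix_mul_assoc)

lemma kron_mult_kron: "kron A B ** kron C D = kron (A ** C) (B ** (D :: 'k::field ^ 'n::finite ^ 'n))"
proof -
  have "(kron A B ** kron C D) $ p $ q = kron (A ** C) (B ** D) $ p $ q" for p q
  proof -
    have "(kron A B ** kron C D) $ p $ q
        = (\<Sum>r\<in>UNIV \<times> UNIV. A $ fst p $ fst r * B $ snd p $ snd r * (C $ fst r $ fst q * D $ snd r $ snd q))"
      by (simp add: matrix_matrix_mult_def kron_def)
    also have "\<dots> = (\<Sum>r1\<in>UNIV. \<Sum>r2\<in>UNIV.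
        (A $ fst p $ r1 * C $ r1 $ fst q) * (B $ snd p $ r2 * D $ r2 $ snd q))"
      by (subst sum.cartesian_product) (simp add: split_beta mult_ac)
    also have "\<dots> = kron (A ** C) (B ** D) $ p $ q"
      by (simp add: kron_def matrix_matrix_mult_def sum_product)
    finally show ?thesis .
  qed
  then show ?thesis
    by (simp add: vec_eq_iff)
qed

lemma kron_mat_one: "kron (mat 1) (mat 1) = (mat 1 :: 'k::field ^ ('n::finite \<times> 'n) ^ ('n \<times> 'n))"
  by (simp add: vec_eq_iff kron_def mat_def prod_eq_iff)

section \<open>Flip-symmetric matrices\<close>

definition flip_symmetric :: "'a::zero ^ ('n::finite \<times> 'n) ^ ('n \<times> 'n) \<Rightarrow> bool" where
  "flip_symmetric X \<longleftrightarrow>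
     (\<forall>p q. X $ p $ q \<noteq> 0 \<longrightarrow> q = p \<or> q = prod.swap p) \<and>
     (\<forall>p q. X $ prod.swap p $ prod.swap q = X $ p $ q)"

lemma flip_symmetric_nth_eq_0:
  "flip_symmetric X \<Longrightarrow> q \<noteq> p \<Longrightarrow> q \<noteq> prod.swap p \<Longrightarrow> X $ p $ q = 0"
  unfolding flip_symmetric_def by blast

lemma flip_symmetric_swap_nth: "flip_symmetric X \<Longrightarrow> X $ prod.swap p $ prod.swap q = X $ p $ q"
  unfolding flip_symmetric_def by (elim conjE allE)

lemma flip_symmetric_mult_nth:
  assumes "flip_symmetric X"
  shows "(X ** Y) $ p $ q = (\<Sum>r\<in>{p, prod.swap p}. X $ p $ r * Y $ r $ q)"
proof -
  have "X $ p $ r = 0" if "r \<notin> {p, prod.swap p}" for r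
    using assms that unfolding flip_symmetric_def by blast
  then show ?thesis
    unfolding matrix_matrix_mult_def vec_lambda_beta by (intro sum.mono_neutral_right) auto
qed

lemma flip_symmetric_commute:
  fixes X Y :: "'a::comm_semiring_1 ^ ('n::finite \<times> 'n) ^ ('n \<times> 'n)"
  assumes X: "flip_symmetric X" and Y: "flip_symmetric Y"
  shows "X ** Y = Y ** X"
proof -
  note X0 = flip_symmetric_nth_eq_0[OF X] and Y0 = flip_symmetric_nth_eq_0[OF Y]
  note Xs = flip_symmetric_swap_nth[OF X] and Ys = flip_symmetric_swap_nth[OF Y]
  have "(X ** Y) $ p $ q = (Y ** X) $ p $ q" for p q
  proof (cases "prod.swap p = p")
    case True
    then show ?thesis
      by (cases "q = p") (simp_all add: flip_symmetric_mult_nth X Y X0 Y0 mult.commute)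
  next
    case False
    let ?s = "prod.swap p"
    have expand: "(A ** B) $ p $ q = A $ p $ p * B $ p $ q + A $ p $ ?s * B $ ?s $ q"
      if "flip_symmetric A" for A B :: "'a ^ ('n \<times> 'n) ^ ('n \<times> 'n)" and q
      using False by (simp add: flip_symmetric_mult_nth[OF that])
    consider "q = p" | "q = ?s" | "q \<noteq> p" "q \<noteq> ?s"
      by blast
    then show ?thesis
    proof cases
      case 1
      then show ?thesis
        using Xs[of ?s p] Ys[of ?s p] by (simp add: expand X Y mult.commute)
    next
      case 2
      then show ?thesis
        using Xs[of p p] Ys[of p p] by (simp add: expand X Y mult.commute add.commute)
    next
      case 3
      then show ?thesis
        by (simp add: expand X Y X0 Y0)
    qed
  qed
  then show ?thesis
    by (simp add: vec_eq_iff)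
qed

lemma flip_symmetric_sum_mscale:
  assumes "\<And>D. D \<in> A \<Longrightarrow> flip_symmetric (F D)"
  shows "flip_symmetric
    (\<Sum>D\<in>A. mscale (c D) (F D :: 'a::comm_semiring_1 ^ ('n::finite \<times> 'n) ^ ('n \<times> 'n)))"
proof -
  have "q = p \<or> q = prod.swap p" if "(\<Sum>D\<in>A. c D * F D $ p $ q) \<noteq> 0" for p q
  proof -
    from that obtain D where "D \<in> A" "c D * F D $ p $ q \<noteq> 0"
      by (meson sum.not_neutral_contains_not_neutral)
    then show ?thesis
      using assms flip_symmetric_nth_eq_0 by fastforce
  qed
  moreover have "(\<Sum>D\<in>A. c D * F D $ prod.swap p $ prod.swap q) = (\<Sum>D\<in>A. c D * F D $ p $ q)" for p q
  proof -
    have "F D $ prod.swap p $ prod.swap q = F D $ p $ q" if "D \<in> A" for D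
      using flip_symmetric_swap_nth[OF assms[OF that]] .
    then show ?thesis
      by simp
  qed
  ultimately show ?thesis
    unfolding flip_symmetric_def by (simp add: sum_component)
qed

lemma sum_list_map_eq_zero: "(\<And>x. x \<in> set xs \<Longrightarrow> f x = 0) \<Longrightarrow> (\<Sum>x\<leftarrow>xs. f x) = 0"
  by (induction xs) auto

lemma sum_list_vflags:
  "(\<Sum>f\<leftarrow>vflags T. h f :: 'a::monoid_add) = (\<Sum>(a, b, c)\<leftarrow>T. h a + h b + h c)"
  by (induction T) (auto simp: vflags_def add.assoc)

lemma sum_list_eflags: "(\<Sum>f\<leftarrow>eflags Ed. h f) = (\<Sum>(f, g)\<leftarrow>Ed. h f + h g)"
  by (induction Ed) (auto simp: eflags_def)

lemma set_vflags: "set (vflags T) = (\<Union>(a, b, c)\<in>set T. {a, b, c})"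
  by (auto simp: vflags_def)

lemma set_eflags: "set (eflags Ed) = (\<Union>(f, g)\<in>set Ed. {f, g})"
  by (auto simp: eflags_def)

lemma wf_jdiag_sum_flags:
  fixes h :: "nat \<Rightarrow> 'a::comm_monoid_add"
  assumes "wf_jdiag (m, T, S1, S2, Ed)"
  shows "(\<Sum>f\<leftarrow>eflags Ed. h f)
    = (\<Sum>f\<leftarrow>vflags T. h f) + (\<Sum>f\<leftarrow>S1. h f) + (\<Sum>f\<leftarrow>S2. h f)"
proof -
  from assms have "distinct (eflags Ed)" "distinct (vflags T @ S1 @ S2)"
    and "set (eflags Ed) = set (vflags T @ S1 @ S2)"
    by auto
  then have "(\<Sum>f\<leftarrow>eflags Ed. h f) = (\<Sum>f\<leftarrow>vflags T @ S1 @ S2. h f)"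
    by (metis sum_list_distinct_conv_sum_set)
  then show ?thesis
    by (simp add: add.assoc)
qed

lemma wf_jdiag_flags_less:
  assumes "wf_jdiag (m, T, S1, S2, Ed)"
  shows "\<forall>f\<in>set (eflags Ed). f < m" "\<forall>f\<in>set (vflags T). f < m"
    "\<forall>f\<in>set S1. f < m" "\<forall>f\<in>set S2. f < m"
  using assms by auto

lemma distinct_set_eq_atLeastLessThan_iff: "distinct xs \<and> set xs = {0..<m} \<longleftrightarrow> mset xs = mset [0..<m]"
  by (metis atLeastLessThan_upt distinct_upt mset_eq_imp_distinct_iff set_eq_iff_mset_eq_distinct)

lemma wf_jdiag_iff_mset:
  "wf_jdiag (m, T, S1, S2, Ed) \<longleftrightarrow>
     mset (vflags T @ S1 @ S2) = mset [0..<m] \<and> mset (eflags Ed) = mset [0..<m]"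
  by (metis wf_jdiag.simps distinct_set_eq_atLeastLessThan_iff)

fun stack :: "jdiag \<Rightarrow> jdiag \<Rightarrow> jdiag" where
  "stack (m1, T1, S11, S12, E1) (m2, T2, S21, S22, E2) =
    (m1 + m2, T1 @ map (\<lambda>(a, b, c). (a + m1, b + m1, c + m1)) T2,
     S11 @ map (\<lambda>x. x + m1) S21, S12 @ map (\<lambda>x. x + m1) S22,
     E1 @ map (\<lambda>(f, g). (f + m1, g + m1)) E2)"

lemma fst_stack: "fst (stack D1 D2) = fst D1 + fst D2"
  by (cases D1; cases D2) simp

lemma vflags_append_shift:
  "vflags (T1 @ map (\<lambda>(a, b, c). (a + k, b + k, c + k)) T2) = vflags T1 @ map (\<lambda>x. x + k) (vflags T2)"
  by (induction T2) (auto simp: vflags_def)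

lemma eflags_append_shift:
  "eflags (E1 @ map (\<lambda>(f, g). (f + k, g + k)) E2) = eflags E1 @ map (\<lambda>x. x + k) (eflags E2)"
  by (induction E2) (auto simp: eflags_def)

lemma wf_stack:
  assumes "wf_jdiag D1" "wf_jdiag D2"
  shows "wf_jdiag (stack D1 D2)"
proof -
  obtain m1 T1 S11 S12 E1 m2 T2 S21 S22 E2
    where D: "D1 = (m1, T1, S11, S12, E1)" "D2 = (m2, T2, S21, S22, E2)"
    by (cases D1; cases D2)
  let ?sh = "\<lambda>x. x + m1"
  from assms
  have wf1: "mset (vflags T1 @ S11 @ S12) = mset [0..<m1]" "mset (eflags E1) = mset [0..<m1]"
    and wf2: "mset (vflags T2 @ S21 @ S22) = mset [0..<m2]" "mset (eflags E2) = mset [0..<m2]"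
    by (simp_all only: D wf_jdiag_iff_mset)
  have "[0..<m1 + m2] = [0..<m1] @ map ?sh [0..<m2]"
    by (simp add: upt_add_eq_append[of 0] map_add_upt add.commute)
  then have upt: "mset [0..<m1 + m2] = mset [0..<m1] + image_mset ?sh (mset [0..<m2])"
    by (simp only: mset_append mset_map)
  have "mset (vflags (T1 @ map (\<lambda>(a, b, c). (a + m1, b + m1, c + m1)) T2)
          @ (S11 @ map ?sh S21) @ (S12 @ map ?sh S22))
      = mset (vflags T1 @ S11 @ S12) + image_mset ?sh (mset (vflags T2 @ S21 @ S22))"
    by (simp add: vflags_append_shift ac_simps)
  moreover have "mset (eflags (E1 @ map (\<lambda>(f, g). (f + m1, g + m1)) E2))
      = mset (eflags E1) + image_mset ?sh (mset (eflags E2))"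
    by (simp add: eflags_append_shift)
  ultimately show ?thesis
    unfolding D stack.simps wf_jdiag_iff_mset by (simp only: wf1 wf2 upt)
qed

definition edge_weight :: "(nat \<times> nat) list \<Rightarrow> (nat \<Rightarrow> 'n \<times> 'n) \<Rightarrow> 'k::comm_semiring_1"
  where
  "edge_weight Ed l = (\<Prod>(f, g)\<leftarrow>Ed. if l g = prod.swap (l f) then 1 else 0)"

definition vertex_weight :: "(nat \<times> nat \<times> nat) list \<Rightarrow> (nat \<Rightarrow> 'n::finite \<times> 'n) \<Rightarrow> 'k::field"
  where
  "vertex_weight T l = (\<Prod>(a, b, c)\<leftarrow>T. - mtr (lbr (Eu (l a)) (Eu (l b)) ** Eu (l c) :: 'k ^ 'n ^ 'n))"

definition strand_matrix :: "nat list \<Rightarrow> (nat \<Rightarrow> 'n \<times> 'n) \<Rightarrow> 'k::field ^ 'n::finite ^ 'n"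
  where
  "strand_matrix S l = mprod (map (\<lambda>x. Eu (l x)) S)"

fun Wst_term :: "jdiag \<Rightarrow> (nat \<Rightarrow> 'n \<times> 'n) \<Rightarrow> 'k::field ^ ('n::finite \<times> 'n) ^ ('n \<times> 'n)"
  where
  "Wst_term (m, T, S1, S2, Ed) l =
     mscale (edge_weight Ed l * vertex_weight T l) (kron (strand_matrix S1 l) (strand_matrix S2 l))"

lemma Wst_eq_sum: "Wst D = (\<Sum>l\<in>{0..<fst D} \<rightarrow>\<^sub>E UNIV. Wst_term D l)"
  by (cases D) (simp add: vec_eq_iff sum_component kron_def edge_weight_def vertex_weight_def
      strand_matrix_def)

lemma edge_weight_eq_of_bool: "edge_weight Ed l = of_bool (\<forall>(f, g)\<in>set Ed. l g = prod.swap (l f))"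
  by (induction Ed) (auto simp: edge_weight_def)

lemma strand_matrix_nth: "strand_matrix S l $ i $ j = of_bool (walk (map l S) i j)"
  unfolding strand_matrix_def
  by (induction S arbitrary: i) (simp_all add: mprod_def mat_def Eu_mult_nth)

lemma Wst_term_nth:
  "Wst_term (m, T, S1, S2, Ed) l $ p $ q = edge_weight Ed l * vertex_weight T l
     * (of_bool (walk (map l S1) (fst p) (fst q)) * of_bool (walk (map l S2) (snd p) (snd q)))"
  by (simp add: kron_def strand_matrix_nth)

lemma Wst_term_cong:
  assumes "wf_jdiag D" and "\<And>f. f < fst D \<Longrightarrow> l f = l' f"
  shows "(Wst_term D l :: 'k::field ^ ('n::finite \<times> 'n) ^ ('n \<times> 'n)) = Wst_term D l'"
proof -
  obtain m T S1 S2 Ed where D: "D = (m, T, S1, S2, Ed)"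
    by (cases D)
  note less = wf_jdiag_flags_less[OF assms(1)[unfolded D]]
  have agree: "l f = l' f" if "f < m" for f
    using assms(2) that by (simp add: D)
  have "edge_weight Ed l = (edge_weight Ed l' :: 'k)"
    unfolding edge_weight_eq_of_bool
  proof (intro arg_cong[where f = of_bool] ball_cong refl)
    fix e assume "e \<in> set Ed"
    with less(1) have "fst e < m" "snd e < m"
      by (cases e; force simp: set_eflags)+
    then show "(case e of (f, g) \<Rightarrow> l g = prod.swap (l f))
        = (case e of (f, g) \<Rightarrow> l' g = prod.swap (l' f))"
      by (cases e) (simp add: agree)
  qed
  moreover have "vertex_weight T l = (vertex_weight T l' :: 'k)"
    unfolding vertex_weight_def
  proof (intro arg_cong[where f = prod_list] map_cong refl)
    fix v assume "v \<in> set T"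
    with less(2) have "fst v < m" "fst (snd v) < m" "snd (snd v) < m"
      by (cases v; force simp: set_vflags)+
    then show "(case v of (a, b, c) \<Rightarrow> - mtr (lbr (Eu (l a)) (Eu (l b)) ** Eu (l c) :: 'k ^ 'n ^ 'n))
        = (case v of (a, b, c) \<Rightarrow> - mtr (lbr (Eu (l' a)) (Eu (l' b)) ** Eu (l' c)))"
      by (cases v) (simp add: agree)
  qed
  moreover have "strand_matrix S l = (strand_matrix S l' :: 'k ^ 'n ^ 'n)" if "\<forall>f\<in>set S. f < m" for S
    unfolding strand_matrix_def using that by (simp add: agree cong: map_cong)
  ultimately show ?thesis
    using less(3,4) by (simp add: D)
qed

section \<open>Charge conservation\<close>

definition charge :: "'n \<Rightarrow> 'n \<times> 'n \<Rightarrow> int" where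
  "charge k x = of_bool (fst x = k) - of_bool (snd x = k)"

lemma charge_swap: "charge k (prod.swap x) = - charge k x"
  by (simp add: charge_def)

lemma sum_charge_walk: "walk xs i j \<Longrightarrow> (\<Sum>x\<leftarrow>xs. charge k x) = charge k (i, j)"
  by (induction xs arbitrary: i) (auto simp: charge_def)

lemma sum_charge_triangle:
  assumes "mtr (lbr (Eu x) (Eu y) ** Eu z :: 'k::field ^ 'n::finite ^ 'n) \<noteq> 0"
  shows "charge k x + charge k y + charge k z = 0"
  using assms by (auto simp: mtr_lbr_Eu charge_def split: if_splits)

lemma charges_cancel_imp_eq_or_swap:
  assumes "\<And>k. charge k (a, c) + charge k (b, d) = 0"
  shows "(c, d) = (a, b) \<or> (c, d) = (b, a)"
  using assms[of a] assms[of b] assms[of c] assms[of d]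
  by (auto simp: charge_def of_bool_def split: if_splits)

lemma Wst_term_support:
  assumes wf: "wf_jdiag D"
    and nz: "(Wst_term D l :: 'k::field ^ ('n::finite \<times> 'n) ^ ('n \<times> 'n)) $ p $ q \<noteq> 0"
  shows "q = p \<or> q = prod.swap p"
proof -
  obtain m T S1 S2 Ed where D: "D = (m, T, S1, S2, Ed)"
    by (cases D)
  from nz have "edge_weight Ed l \<noteq> (0 :: 'k)" and "vertex_weight T l \<noteq> (0 :: 'k)"
    and walks: "walk (map l S1) (fst p) (fst q)" "walk (map l S2) (snd p) (snd q)"
    unfolding D Wst_term_nth by auto
  then have edges: "\<forall>(f, g)\<in>set Ed. l g = prod.swap (l f)"
    and vertices: "\<forall>(a, b, c)\<in>set T. mtr (lbr (Eu (l a)) (Eu (l b)) ** Eu (l c) :: 'k ^ 'n ^ 'n) \<noteq> 0"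
    by (auto simp: edge_weight_eq_of_bool vertex_weight_def prod_list_zero_iff image_iff)
  have "charge k (fst p, fst q) + charge k (snd p, snd q) = 0" for k
  proof -
    let ?h = "\<lambda>f. charge k (l f)"
    have "(\<Sum>f\<leftarrow>eflags Ed. ?h f) = 0"
      using edges unfolding sum_list_eflags
      by (intro sum_list_map_eq_zero) (auto simp: charge_swap)
    moreover have "(\<Sum>f\<leftarrow>vflags T. ?h f) = 0"
      using vertices unfolding sum_list_vflags
      by (intro sum_list_map_eq_zero) (auto dest: sum_charge_triangle)
    moreover have "(\<Sum>f\<leftarrow>S1. ?h f) = charge k (fst p, fst q)"
      using sum_charge_walk[OF walks(1)] by (simp add: comp_def)
    moreover have "(\<Sum>f\<leftarrow>S2. ?h f) = charge k (snd p, snd q)"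
      using sum_charge_walk[OF walks(2)] by (simp add: comp_def)
    ultimately show ?thesis
      using wf_jdiag_sum_flags[OF wf[unfolded D], of ?h] by simp
  qed
  then show ?thesis
    using charges_cancel_imp_eq_or_swap[of "fst p" "fst q" "snd p" "snd q"]
    by (cases p; cases q) auto
qed

section \<open>Invariance under relabelling indices\<close>

lemma map_prod_eq_swap_map_prod_iff:
  "inj \<sigma> \<Longrightarrow> map_prod \<sigma> \<sigma> x = prod.swap (map_prod \<sigma> \<sigma> y) \<longleftrightarrow> x = prod.swap y"
  by (cases x; cases y) (auto simp: inj_eq)

lemma Wst_term_relabel_nth:
  assumes "inj \<sigma>"
  shows "(Wst_term D (map_prod \<sigma> \<sigma> \<circ> l) :: 'k::field ^ ('n::finite \<times> 'n) ^ ('n \<times> 'n))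
           $ map_prod \<sigma> \<sigma> p $ map_prod \<sigma> \<sigma> q = Wst_term D l $ p $ q"
proof -
  obtain m T S1 S2 Ed where D: "D = (m, T, S1, S2, Ed)"
    by (cases D)
  have "edge_weight Ed (map_prod \<sigma> \<sigma> \<circ> l) = (edge_weight Ed l :: 'k)"
    using assms by (simp add: edge_weight_eq_of_bool map_prod_eq_swap_map_prod_iff split_def)
  moreover have "vertex_weight T (map_prod \<sigma> \<sigma> \<circ> l) = (vertex_weight T l :: 'k)"
    using assms by (simp add: vertex_weight_def mtr_lbr_Eu inj_eq split_def)
  moreover have "walk (map (map_prod \<sigma> \<sigma> \<circ> l) S) (\<sigma> i) (\<sigma> j) = walk (map l S) i j" for S i j
    using walk_map_prod[OF assms, of "map l S"] by simp
  ultimately show ?thesis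
    unfolding D Wst_term_nth by simp
qed

lemma bij_betw_restrict_comp:
  assumes "bij \<tau>"
  shows "bij_betw (\<lambda>l. restrict (\<tau> \<circ> l) I) (I \<rightarrow>\<^sub>E UNIV) (I \<rightarrow>\<^sub>E UNIV)"
proof (rule bij_betw_byWitness[where f' = "\<lambda>l. restrict (inv \<tau> \<circ> l) I"])
  show "\<forall>l\<in>I \<rightarrow>\<^sub>E UNIV. restrict (inv \<tau> \<circ> restrict (\<tau> \<circ> l) I) I = l"
    using assms by (auto simp: fun_eq_iff bij_is_inj PiE_def extensional_def)
  show "\<forall>l\<in>I \<rightarrow>\<^sub>E UNIV. restrict (\<tau> \<circ> restrict (inv \<tau> \<circ> l) I) I = l"
    using assms by (auto simp: fun_eq_iff bij_is_surj surj_f_inv_f PiE_def extensional_def)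
qed auto

lemma Wst_relabel_nth:
  assumes wf: "wf_jdiag D" and "bij \<sigma>"
  shows "(Wst D :: 'k::field ^ ('n::finite \<times> 'n) ^ ('n \<times> 'n)) $ map_prod \<sigma> \<sigma> p $ map_prod \<sigma> \<sigma> q
    = Wst D $ p $ q"
proof -
  let ?\<tau> = "map_prod \<sigma> \<sigma>" and ?L = "{0..<fst D} \<rightarrow>\<^sub>E UNIV"
  have "bij ?\<tau>"
    using bij_betw_map_prod[OF assms(2) assms(2)] by simp
  have "(Wst D :: 'k ^ ('n \<times> 'n) ^ ('n \<times> 'n)) $ ?\<tau> p $ ?\<tau> q
      = (\<Sum>l\<in>?L. Wst_term D (restrict (?\<tau> \<circ> l) {0..<fst D}) $ ?\<tau> p $ ?\<tau> q)"
    unfolding Wst_eq_sum sum_component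
    using sum.reindex_bij_betw[OF bij_betw_restrict_comp[OF \<open>bij ?\<tau>\<close>],
        of "\<lambda>l. (Wst_term D l :: 'k ^ ('n \<times> 'n) ^ ('n \<times> 'n)) $ ?\<tau> p $ ?\<tau> q" "{0..<fst D}"]
    by simp
  also have "\<dots> = (\<Sum>l\<in>?L. Wst_term D (?\<tau> \<circ> l) $ ?\<tau> p $ ?\<tau> q)"
  proof -
    have "Wst_term D (restrict (?\<tau> \<circ> l) {0..<fst D})
        = (Wst_term D (?\<tau> \<circ> l) :: 'k ^ ('n \<times> 'n) ^ ('n \<times> 'n))" for l
      by (rule Wst_term_cong[OF wf]) simp
    then show ?thesis
      by simp
  qed
  also have "\<dots> = Wst D $ p $ q"
    unfolding Wst_eq_sum sum_component
    by (simp only: Wst_term_relabel_nth[OF bij_is_inj[OF assms(2)]])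
  finally show ?thesis .
qed

lemma Wst_flip_symmetric:
  assumes wf: "wf_jdiag D"
  shows "flip_symmetric (Wst D :: 'k::field ^ ('n::finite \<times> 'n) ^ ('n \<times> 'n))"
proof -
  let ?X = "Wst D :: 'k ^ ('n \<times> 'n) ^ ('n \<times> 'n)"
  have support: "q = p \<or> q = prod.swap p" if "?X $ p $ q \<noteq> 0" for p q
  proof -
    from that obtain l where "Wst_term D l $ p $ q \<noteq> (0 :: 'k)"
      unfolding Wst_eq_sum sum_component by (meson sum.not_neutral_contains_not_neutral)
    then show ?thesis
      using Wst_term_support[OF wf] by blast
  qed
  have "?X $ prod.swap p $ prod.swap q = ?X $ p $ q" for p q
  proof -
    obtain a b where p: "p = (a, b)"
      by (cases p)
    consider "q = p" | "q = prod.swap p" | "q \<noteq> p" "q \<noteq> prod.swap p"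
      by blast
    then show ?thesis
    proof cases
      case 1
      then show ?thesis
        using Wst_relabel_nth[OF wf bij_transpose, of a b p p] by (simp add: p)
    next
      case 2
      then show ?thesis
        using Wst_relabel_nth[OF wf bij_transpose, of a b p "prod.swap p"] by (simp add: p)
    next
      case 3
      then have "?X $ p $ q = 0" "?X $ prod.swap p $ prod.swap q = 0"
        using support by (metis swap_swap)+
      then show ?thesis
        by simp
    qed
  qed
  with support show ?thesis
    unfolding flip_symmetric_def by blast
qed

lemma Wst_term_stack:
  "(Wst_term (stack D1 D2) l :: 'k::field ^ ('n::finite \<times> 'n) ^ ('n \<times> 'n))
     = Wst_term D1 l ** Wst_term D2 (\<lambda>x. l (x + fst D1))"
  by (cases D1; cases D2)
    (simp add: mscale_mult_mscale kron_mult_kron edge_weight_def vertex_weight_def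
      strand_matrix_def mprod_append split_def comp_def mult_ac)

definition join_labellings :: "nat \<Rightarrow> nat \<Rightarrow> (nat \<Rightarrow> 'a) \<times> (nat \<Rightarrow> 'a) \<Rightarrow> nat \<Rightarrow> 'a"
  where "join_labellings m n ls x =
    (if x < m then fst ls x else if x < m + n then snd ls (x - m) else undefined)"

lemma bij_betw_split_labelling:
  fixes m n :: nat
  shows "bij_betw (\<lambda>l. (restrict l {0..<m}, restrict (\<lambda>x. l (x + m)) {0..<n}))
     ({0..<m + n} \<rightarrow>\<^sub>E B) (({0..<m} \<rightarrow>\<^sub>E B) \<times> ({0..<n} \<rightarrow>\<^sub>E B))"
proof (rule bij_betw_byWitness[where f' = "join_labellings m n"])
  show "\<forall>l\<in>{0..<m + n} \<rightarrow>\<^sub>E B.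
      join_labellings m n (restrict l {0..<m}, restrict (\<lambda>x. l (x + m)) {0..<n}) = l"
    by (auto simp: join_labellings_def fun_eq_iff PiE_def extensional_def)
  show "\<forall>ls\<in>({0..<m} \<rightarrow>\<^sub>E B) \<times> ({0..<n} \<rightarrow>\<^sub>E B).
      (restrict (join_labellings m n ls) {0..<m}, restrict (\<lambda>x. join_labellings m n ls (x + m)) {0..<n}) = ls"
    by (auto simp: join_labellings_def fun_eq_iff PiE_def extensional_def)
  show "join_labellings m n ` (({0..<m} \<rightarrow>\<^sub>E B) \<times> ({0..<n} \<rightarrow>\<^sub>E B)) \<subseteq> {0..<m + n} \<rightarrow>\<^sub>E B"
    by (auto simp: join_labellings_def PiE_def Pi_def extensional_def)
qed auto

lemma Wst_stack:
  assumes wf1: "wf_jdiag D1" and wf2: "wf_jdiag D2"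
  shows "(Wst (stack D1 D2) :: 'k::field ^ ('n::finite \<times> 'n) ^ ('n \<times> 'n)) = Wst D1 ** Wst D2"
proof -
  let ?m1 = "fst D1" and ?m2 = "fst D2"
  let ?L = "\<lambda>m. {0..<m} \<rightarrow>\<^sub>E (UNIV :: ('n \<times> 'n) set)"
  let ?prod = "\<lambda>(l1, l2). (Wst_term D1 l1 ** Wst_term D2 l2 :: 'k ^ ('n \<times> 'n) ^ ('n \<times> 'n))"
  let ?split = "\<lambda>l. (restrict l {0..<?m1}, restrict (\<lambda>x. l (x + ?m1)) {0..<?m2})"
  have "Wst (stack D1 D2)
      = (\<Sum>l\<in>?L (?m1 + ?m2). Wst_term D1 l ** Wst_term D2 (\<lambda>x. l (x + ?m1)) :: 'k ^ _ ^ _)"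
    by (simp only: Wst_eq_sum[of "stack D1 D2"] Wst_term_stack fst_stack)
  also have "\<dots> = (\<Sum>l\<in>?L (?m1 + ?m2). ?prod (?split l))"
  proof -
    have "Wst_term D1 l = (Wst_term D1 (restrict l {0..<?m1}) :: 'k ^ ('n \<times> 'n) ^ ('n \<times> 'n))"
      and "Wst_term D2 (\<lambda>x. l (x + ?m1))
         = (Wst_term D2 (restrict (\<lambda>x. l (x + ?m1)) {0..<?m2}) :: 'k ^ ('n \<times> 'n) ^ ('n \<times> 'n))" for l
      by (rule Wst_term_cong[OF wf1] Wst_term_cong[OF wf2]; simp)+
    then show ?thesis
      by simp
  qed
  also have "\<dots> = (\<Sum>ls\<in>?L ?m1 \<times> ?L ?m2. ?prod ls)"
    by (rule sum.reindex_bij_betw[OF bij_betw_split_labelling])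
  also have "\<dots> = (\<Sum>l1\<in>?L ?m1. \<Sum>l2\<in>?L ?m2. Wst_term D1 l1 ** Wst_term D2 l2)"
    by (rule sum.cartesian_product[symmetric])
  also have "\<dots> = Wst D1 ** Wst D2"
    by (simp only: Wst_eq_sum[of D1] Wst_eq_sum[of D2] sum_matrix_mult matrix_mult_sum) (rule sum.swap)
  finally show ?thesis .
qed

lemma Wimage_iff:
  "(X :: 'k::field ^ ('n::finite \<times> 'n) ^ ('n \<times> 'n)) \<in> Wimage \<longleftrightarrow>
     (\<exists>A c. finite A \<and> (\<forall>D\<in>A. wf_jdiag D) \<and> X = (\<Sum>D\<in>A. mscale (c D) (Wst D)))"
proof -
  have "(\<chi> p q. \<Sum>D\<in>A. c D * Wst D $ p $ q)
      = (\<Sum>D\<in>A. mscale (c D) (Wst D) :: 'k ^ ('n \<times> 'n) ^ ('n \<times> 'n))" for A c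
    by (simp add: vec_eq_iff sum_component)
  then show ?thesis
    by (simp add: Wimage_def)
qed

lemma Wst_in_Wimage: "wf_jdiag D \<Longrightarrow> Wst D \<in> Wimage"
  unfolding Wimage_iff by (intro exI[of _ "{D}"] exI[of _ "\<lambda>_. 1"]) simp

lemma zero_in_Wimage: "0 \<in> Wimage"
  unfolding Wimage_iff by (intro exI[of _ "{}"]) simp

lemma Wimage_add:
  assumes "X \<in> Wimage" "Y \<in> Wimage"
  shows "X + Y \<in> Wimage"
proof -
  from assms obtain A1 c1 A2 c2 where
    A1: "finite A1" "\<forall>D\<in>A1. wf_jdiag D" and X: "X = (\<Sum>D\<in>A1. mscale (c1 D) (Wst D))" and
    A2: "finite A2" "\<forall>D\<in>A2. wf_jdiag D" and Y: "Y = (\<Sum>D\<in>A2. mscale (c2 D) (Wst D))"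
    unfolding Wimage_iff by blast
  let ?c = "\<lambda>D. (if D \<in> A1 then c1 D else 0) + (if D \<in> A2 then c2 D else 0)"
  have "X = (\<Sum>D\<in>A1 \<union> A2. mscale (if D \<in> A1 then c1 D else 0) (Wst D))"
    unfolding X using A1(1) A2(1) by (intro sum_mscale_mono_neutral) auto
  moreover have "Y = (\<Sum>D\<in>A1 \<union> A2. mscale (if D \<in> A2 then c2 D else 0) (Wst D))"
    unfolding Y using A1(1) A2(1) by (intro sum_mscale_mono_neutral) auto
  ultimately have "X + Y = (\<Sum>D\<in>A1 \<union> A2. mscale (?c D) (Wst D))"
    by (simp only: mscale_add_left sum.distrib)
  then show ?thesis
    unfolding Wimage_iff using A1 A2 by (intro exI[of _ "A1 \<union> A2"] exI[of _ ?c]) auto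
qed

lemma Wimage_mscale:
  assumes "X \<in> Wimage"
  shows "mscale a X \<in> Wimage"
proof -
  from assms obtain A c
    where A: "finite A" "\<forall>D\<in>A. wf_jdiag D" and X: "X = (\<Sum>D\<in>A. mscale (c D) (Wst D))"
    unfolding Wimage_iff by blast
  have "mscale a X = (\<Sum>D\<in>A. mscale (a * c D) (Wst D))"
    by (simp only: X mscale_sum mscale_mscale)
  then show ?thesis
    unfolding Wimage_iff using A by (intro exI[of _ A] exI[of _ "\<lambda>D. a * c D"]) simp
qed

lemma Wimage_sum: "finite B \<Longrightarrow> (\<And>b. b \<in> B \<Longrightarrow> f b \<in> Wimage) \<Longrightarrow> sum f B \<in> Wimage"
  by (induction B rule: finite_induct) (simp_all add: zero_in_Wimage Wimage_add)

lemma Wimage_mult: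
  assumes "X \<in> Wimage" "Y \<in> Wimage"
  shows "X ** Y \<in> Wimage"
proof -
  from assms obtain A1 c1 A2 c2 where
    A1: "finite A1" "\<forall>D\<in>A1. wf_jdiag D" and X: "X = (\<Sum>D\<in>A1. mscale (c1 D) (Wst D))" and
    A2: "finite A2" "\<forall>D\<in>A2. wf_jdiag D" and Y: "Y = (\<Sum>D\<in>A2. mscale (c2 D) (Wst D))"
    unfolding Wimage_iff by blast
  have "X ** Y = (\<Sum>D2\<in>A2. \<Sum>D1\<in>A1. mscale (c1 D1 * c2 D2) (Wst (stack D1 D2)))"
    unfolding X Y sum_matrix_mult matrix_mult_sum mscale_mult_mscale
    using A1(2) A2(2) by (simp add: Wst_stack)
  also have "\<dots> \<in> Wimage"
  proof (intro Wimage_sum A1(1) A2(1))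
    fix D1 D2
    assume "D1 \<in> A1" "D2 \<in> A2"
    with A1(2) A2(2) have "wf_jdiag (stack D1 D2)"
      by (simp add: wf_stack)
    then show "mscale (c1 D1 * c2 D2) (Wst (stack D1 D2)) \<in> Wimage"
      by (intro Wimage_mscale Wst_in_Wimage)
  qed
  finally show ?thesis .
qed

lemma mat_one_in_Wimage: "(mat 1 :: 'k::field ^ ('n::finite \<times> 'n) ^ ('n \<times> 'n)) \<in> Wimage"
proof -
  have "(Wst (0, [], [], [], []) :: 'k ^ ('n \<times> 'n) ^ ('n \<times> 'n)) \<in> Wimage"
    by (rule Wst_in_Wimage) (simp add: vflags_def eflags_def)
  moreover have "Wst (0, [], [], [], []) = (mat 1 :: 'k ^ ('n \<times> 'n) ^ ('n \<times> 'n))"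
    by (simp add: Wst_eq_sum edge_weight_def vertex_weight_def strand_matrix_def mprod_def kron_mat_one)
  ultimately show ?thesis
    by simp
qed

lemma Wimage_flip_symmetric:
  assumes "X \<in> Wimage"
  shows "flip_symmetric X"
proof -
  from assms obtain A c where "\<forall>D\<in>A. wf_jdiag D" and X: "X = (\<Sum>D\<in>A. mscale (c D) (Wst D))"
    unfolding Wimage_iff by blast
  then show ?thesis
    by (simp add: flip_symmetric_sum_mscale Wst_flip_symmetric)
qed

theorem corollary5p2:
  fixes W :: "('k::field_char_0 ^ ('n::finite \<times> 'n) ^ ('n \<times> 'n)) set"
  assumes "W = Wimage"
  shows "mat 1 \<in> W \<and>
         (\<forall>X\<in>W. \<forall>Y\<in>W. X + Y \<in> W) \<and>
         (\<forall>c::'k. \<forall>X\<in>W. (\<chi> p q. c * X $ p $ q) \<in> W) \<and>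
         (\<forall>X\<in>W. \<forall>Y\<in>W. X ** Y \<in> W) \<and>
         (\<forall>X\<in>W. \<forall>Y\<in>W. X ** Y = Y ** X)"
  unfolding assms
proof (intro conjI ballI allI)
  show "mat 1 \<in> Wimage"
    by (rule mat_one_in_Wimage)
next
  fix X Y :: "'k ^ ('n \<times> 'n) ^ ('n \<times> 'n)"
  assume "X \<in> Wimage" "Y \<in> Wimage"
  then show "X + Y \<in> Wimage"
    by (rule Wimage_add)
next
  fix c :: 'k and X :: "'k ^ ('n \<times> 'n) ^ ('n \<times> 'n)"
  assume "X \<in> Wimage"
  then show "(\<chi> p q. c * X $ p $ q) \<in> Wimage"
    using Wimage_mscale[of X c] by (simp add: mscale_def)
next
  fix X Y :: "'k ^ ('n \<times> 'n) ^ ('n \<times> 'n)"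
  assume "X \<in> Wimage" "Y \<in> Wimage"
  then show "X ** Y \<in> Wimage"
    by (rule Wimage_mult)
next
  fix X Y :: "'k ^ ('n \<times> 'n) ^ ('n \<times> 'n)"
  assume "X \<in> Wimage" "Y \<in> Wimage"
  then show "X ** Y = Y ** X"
    by (intro flip_symmetric_commute Wimage_flip_symmetric)
qed

end
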